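(* Let $q$ be a prime power, $1\le k$, $k+1<n\le m$, let $g_1,\dots,g_n\in\mathbb{F}_{q^m}$ be linearly independent over $\mathbb{F}_q$, and let $\mathcal{G}$ be the Gabidulin code of dimension $k$ with respect to $g_1,\dots,g_n$. Let $f\in\mathcal{L}_q(x,\mathbb{F}_{q^m})$ be of the form $f(x)=x^{q^{k+1}}-a_1x^{q^k}+\sum_{i=0}^{k-1}c_ix^{q^i}$ with $a_1,c_i\in\mathbb{F}_{q^m}$, and let $\sigma_f=(f(g_1),\dots,f(g_n))$. Then $\sigma_f$ is not a deep hole of $\mathcal{G}$ in the rank metric (i.e. $d_R(\sigma_f,\mathcal{G})\ne n-k$) if and only if there exist $\mathbb{F}_q$-linearly independent elements $\beta_1,\dots,\beta_{k+1}\in\langle g_1,\dots,g_n\rangle$ such that $$a_1=\frac{\det\mathcal{R}_k(\beta_1,\dots,\beta_{k+1})}{\det M_{k+1}(\beta_1,\dots,\beta_{k+1})}.$$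
   Context: For $\beta_1,\dots,\beta_s\in\mathbb{F}_{q^m}$, the $t\times s$ Moore matrix $M_t(\beta_1,\dots,\beta_s)$ has $(i,j)$ entry $\beta_j^{q^{i-1}}$, $1\le i\le t$. $\mathcal{R}_k(\beta_1,\dots,\beta_{k+1})$ is the $(k+1)\times(k+1)$ matrix obtained from $M_{k+2}(\beta_1,\dots,\beta_{k+1})$ by deleting the row $(\beta_1^{q^k},\dots,\beta_{k+1}^{q^k})$. A $q$-linearized polynomial over $\mathbb{F}_{q^m}$ is $L(x)=\sum_{i=0}^{d}a_ix^{q^i}$, $a_i\in\mathbb{F}_{q^m}$, with $q$-degree $d$ if $a_d\neq 0$; $\mathcal{L}_q(x,\mathbb{F}_{q^m})$ is the set of these. Rank distance: $d_R(\mathbf{u},\mathbf{v})=\dim_{\mathbb{F}_q}\langle u_1-v_1,\dots,u_n-v_n\rangle$, $d_R(\mathbf{u},C)=\min_{\mathbf{c}\in C}d_R(\mathbf{u},\mathbf{c})$; a deep hole is a word attaining the covering radius $\max_{\mathbf{u}}d_R(\mathbf{u},C)$, which for $\mathcal{G}$ equals $n-k$. The Gabidulin code of dimension $k$ is $\mathcal{G}=\{(v(g_1),\dots,v(g_n)) : v\in\mathcal{L}_q(x,\mathbb{F}_{q^m}),\ v=0\text{ or }\deg_q(v)<k\}$. *)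

theory Defs
  imports "HOL-Computational_Algebra.Primes" "Jordan_Normal_Form.Determinant"
begin

text \<open>Ambient field F_{q^m} is a finite field type 'a with CARD('a) = q^m.
  The subfield F_q is the fixed field of the Frobenius x -> x^q.\<close>

definition Fq :: "nat \<Rightarrow> 'a::field set" where
  "Fq q = {x. x ^ q = x}"

definition lin_indep_q :: "nat \<Rightarrow> (nat \<Rightarrow> 'a::field) \<Rightarrow> nat \<Rightarrow> bool" where
  "lin_indep_q q v s \<longleftrightarrow>
     (\<forall>c. (\<forall>i<s. c i \<in> Fq q) \<and> (\<Sum>i<s. c i * v i) = 0 \<longrightarrow> (\<forall>i<s. c i = 0))"

definition span_q :: "nat \<Rightarrow> (nat \<Rightarrow> 'a::field) \<Rightarrow> nat \<Rightarrow> 'a set" where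
  "span_q q v s = {(\<Sum>i<s. c i * v i) | c. \<forall>i<s. c i \<in> Fq q}"

definition dim_q :: "nat \<Rightarrow> 'a::field set \<Rightarrow> nat" where
  "dim_q q V = Max {r. \<exists>b. (\<forall>i<r. b i \<in> V) \<and> lin_indep_q q b r}"

definition rank_dist :: "nat \<Rightarrow> nat \<Rightarrow> (nat \<Rightarrow> 'a::field) \<Rightarrow> (nat \<Rightarrow> 'a) \<Rightarrow> nat" where
  "rank_dist q n u v = dim_q q (span_q q (\<lambda>i. u i - v i) n)"

definition lin_eval :: "nat \<Rightarrow> nat \<Rightarrow> (nat \<Rightarrow> 'a::field) \<Rightarrow> 'a \<Rightarrow> 'a" where
  "lin_eval q d a x = (\<Sum>i<d. a i * x ^ (q ^ i))"

text \<open>Words are functions nat => 'a, set to 0 outside 0..n-1.\<close>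
definition gabidulin :: "nat \<Rightarrow> nat \<Rightarrow> nat \<Rightarrow> (nat \<Rightarrow> 'a::field) \<Rightarrow> (nat \<Rightarrow> 'a) set" where
  "gabidulin q k n g = {(\<lambda>i. if i < n then lin_eval q k a (g i) else 0) | a. True}"

definition rank_dist_code :: "nat \<Rightarrow> nat \<Rightarrow> (nat \<Rightarrow> 'a::field) \<Rightarrow> (nat \<Rightarrow> 'a) set \<Rightarrow> nat" where
  "rank_dist_code q n u C = Min (rank_dist q n u ` C)"

text \<open>Moore matrix M_t(beta_1..beta_s): entry (i,j) = beta_j^{q^i}, 0-indexed.\<close>
definition moore :: "nat \<Rightarrow> nat \<Rightarrow> nat \<Rightarrow> (nat \<Rightarrow> 'a::field) \<Rightarrow> 'a mat" where
  "moore q t s \<beta> = mat t s (\<lambda>(i, j). \<beta> j ^ (q ^ i))"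

text \<open>R_k(beta_1..beta_{k+1}): M_{k+2} with the row of exponent q^k deleted.\<close>
definition R_mat :: "nat \<Rightarrow> nat \<Rightarrow> (nat \<Rightarrow> 'a::field) \<Rightarrow> 'a mat" where
  "R_mat q k \<beta> = mat (k+1) (k+1)
     (\<lambda>(i, j). \<beta> j ^ (q ^ (if i < k then i else k + 1)))"

end

theory Submission
  imports Defs "HOL-Computational_Algebra.Polynomial"
begin

text \<open>Subtracting from \<open>\<sigma>\<^sub>f\<close> the codeword of a linearized polynomial \<open>v\<close> of \<open>q\<close>-degree
  below \<open>k\<close> leaves the evaluation vector of \<open>h = f - v\<close>, a monic linearized polynomial of
  \<open>q\<close>-degree \<open>k + 1\<close> whose coefficient of \<open>x^(q^k)\<close> is \<open>-a\<^sub>1\<close>. Its rank distance is the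
  \<open>F\<^sub>q\<close>-dimension of \<open>h(\<langle>g\<rangle>)\<close>, which by rank-nullity is \<open>n\<close> minus the dimension of
  \<open>ker h \<inter> \<langle>g\<rangle>\<close>. Interpolating \<open>f\<close> at \<open>g\<^sub>1, \<dots>, g\<^sub>k\<close> makes that kernel at least
  \<open>k\<close>-dimensional, so the distance to the code is at most \<open>n - k\<close>, and it is smaller iff some
  such \<open>h\<close> kills \<open>k + 1\<close> independent \<open>\<beta>\<^sub>i \<in> \<langle>g\<rangle>\<close>. A monic \<open>h\<close> of \<open>q\<close>-degree \<open>k + 1\<close>
  vanishing at \<open>\<beta>\<^sub>1, \<dots>, \<beta>\<^sub>k\<^sub>+\<^sub>1\<close> is unique, since a nonzero linearized polynomial of
  \<open>q\<close>-degree at most \<open>k\<close> has at most \<open>q^k\<close> roots; it is \<open>det M\<^sub>k\<^sub>+\<^sub>2(\<beta>, x) / det M\<^sub>k\<^sub>+\<^sub>1(\<beta>)\<close>,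
  whose coefficient of \<open>x^(q^k)\<close> is \<open>-det R\<^sub>k(\<beta>) / det M\<^sub>k\<^sub>+\<^sub>1(\<beta>)\<close> by Laplace expansion
  along the last column.\<close>

section \<open>Finite fields\<close>

lemma of_nat_card_UNIV_eq_0: "of_nat (card (UNIV :: 'a::{field,finite} set)) = (0 :: 'a)"
proof -
  have "(\<Sum>x\<in>UNIV. x :: 'a) = (\<Sum>x\<in>UNIV. x + 1)"
    by (rule sum.reindex_bij_witness[of _ "\<lambda>x. x + 1" "\<lambda>x. x - 1"]) auto
  also have "\<dots> = (\<Sum>x\<in>UNIV. x) + of_nat (card (UNIV :: 'a set))"
    by (simp add: sum.distrib)
  finally show ?thesis by simp
qed

lemma prime_CHAR_finite_field: "prime CHAR('a::{field,finite})"
  by (intro prime_CHAR_semidom finite_imp_CHAR_pos) simp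

lemma CHAR_eq_prime_of_card:
  assumes "prime p" and "card (UNIV :: 'a::{field,finite} set) = p ^ n"
  shows "CHAR('a) = p"
proof -
  have "CHAR('a) dvd card (UNIV :: 'a set)"
    using of_nat_card_UNIV_eq_0[where 'a = 'a] of_nat_eq_0_iff_char_dvd[where 'a = 'a] by blast
  then have "CHAR('a) dvd p ^ n" by (simp add: assms(2))
  then show ?thesis
    using prime_dvd_power[OF prime_CHAR_finite_field] primes_dvd_imp_eq[OF prime_CHAR_finite_field assms(1)]
    by blast
qed

text \<open>The sort \<open>{field,finite}\<close> is not an instance of the class \<open>finite_field\<close> of
  \<open>finite_field_power_card_eq_same\<close>, so Fermat's little theorem is proved again.\<close>
lemma power_card_UNIV_eq:
  fixes x :: "'a::{field,finite}"
  shows "x ^ card (UNIV :: 'a set) = x"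
proof (cases "x = 0")
  case False
  let ?U = "UNIV - {0 :: 'a}"
  have "(\<Prod>y\<in>?U. x * y) = (\<Prod>y\<in>?U. y)"
    by (rule prod.reindex_bij_witness[of _ "\<lambda>y. y / x" "\<lambda>y. x * y"]) (use False in auto)
  moreover have "(\<Prod>y\<in>?U. y) \<noteq> 0" by simp
  ultimately have "x ^ card ?U = 1" by (simp add: prod.distrib)
  moreover have card: "card (UNIV :: 'a set) = Suc (card ?U)"
    using finite_UNIV_card_ge_0[where 'a = 'a] by (simp add: card_Diff_singleton)
  ultimately show ?thesis unfolding card power_Suc by simp
qed (simp add: finite_UNIV_card_ge_0)

section \<open>Linearized polynomials, Moore matrices and the Gabidulin code\<close>

lemma card_lin_eval_roots_le:
  fixes a :: "nat \<Rightarrow> 'a::field"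
  assumes q: "1 < q" and i0: "i0 < s" "a i0 \<noteq> 0"
  shows "card {x. lin_eval q s a x = 0} \<le> q ^ (s - 1)"
proof -
  define P where "P = (\<Sum>i<s. monom (a i) (q ^ i))"
  have poly_P: "poly P x = lin_eval q s a x" for x
    by (simp add: P_def lin_eval_def poly_sum poly_monom)
  have "coeff P (q ^ i0) = (\<Sum>i<s. if q ^ i = q ^ i0 then a i else 0)"
    by (simp add: P_def coeff_sum)
  also have "\<dots> = a i0" using i0 q by simp
  finally have "P \<noteq> 0" using i0 by auto
  have "degree P \<le> q ^ (s - 1)" unfolding P_def
  proof (rule degree_sum_le)
    fix i assume "i \<in> {..<s}"
    then have "q ^ i \<le> q ^ (s - 1)" using q by (intro power_increasing) auto
    then show "degree (monom (a i) (q ^ i)) \<le> q ^ (s - 1)" using degree_monom_le order_trans by blast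
  qed simp
  with card_poly_roots_bound[OF \<open>P \<noteq> 0\<close>] show ?thesis by (simp add: poly_P)
qed

lemma lin_eval_cong: "(\<And>i. i < d \<Longrightarrow> a i = b i) \<Longrightarrow> lin_eval q d a x = lin_eval q d b x"
  unfolding lin_eval_def by simp

lemma lin_eval_Suc: "lin_eval q (Suc d) a x = lin_eval q d a x + a d * x ^ (q ^ d)"
  unfolding lin_eval_def by simp

lemma lin_eval_diff: "lin_eval q d a x - lin_eval q d b x = lin_eval q d (\<lambda>i. a i - b i) x"
  unfolding lin_eval_def by (simp add: sum_subtractf left_diff_distrib)

lemma lin_eval_pad:
  "k \<le> d \<Longrightarrow> lin_eval q k a x = lin_eval q d (\<lambda>i. if i < k then a i else 0) x"
  unfolding lin_eval_def by (rule sum.mono_neutral_cong_left) auto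

lemma lin_eval_moore:
  "j < s \<Longrightarrow> lin_eval q s a (\<beta> j) = (transpose_mat (moore q s s \<beta>) *\<^sub>v vec s a) $ j"
  by (simp add: lin_eval_def moore_def scalar_prod_def atLeast0LessThan mult.commute)

lemma exists_mult_mat_vec_eq:
  fixes A :: "'a::field mat"
  assumes A: "A \<in> carrier_mat n n" and det: "det A \<noteq> 0" and b: "b \<in> carrier_vec n"
  shows "\<exists>x\<in>carrier_vec n. A *\<^sub>v x = b"
proof
  have adj: "adj_mat A \<in> carrier_mat n n" "A * adj_mat A = det A \<cdot>\<^sub>m 1\<^sub>m n" by (simp_all add: adj_mat A)
  have "A *\<^sub>v (inverse (det A) \<cdot>\<^sub>v (adj_mat A *\<^sub>v b)) = inverse (det A) \<cdot>\<^sub>v ((A * adj_mat A) *\<^sub>v b)"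
    using A adj(1) b by (simp add: mult_mat_vec)
  also have "(A * adj_mat A) *\<^sub>v b = det A \<cdot>\<^sub>v b"
    unfolding adj(2) using b
    by (intro eq_vecI) (auto simp: scalar_prod_def if_distrib[of "\<lambda>x. _ * x"] if_distrib[of "\<lambda>x. x * _"] cong: if_cong)
  also have "inverse (det A) \<cdot>\<^sub>v (det A \<cdot>\<^sub>v b) = b" using det by (simp add: smult_smult_assoc)
  finally show "A *\<^sub>v (inverse (det A) \<cdot>\<^sub>v (adj_mat A *\<^sub>v b)) = b" .
qed (use adj_mat[OF A] b in simp)

lemma moore_interpolation:
  assumes "det (moore q k k g) \<noteq> 0"
  shows "\<exists>a. \<forall>l<k. lin_eval q k a (g l) = b l"
proof -
  have M: "transpose_mat (moore q k k g) \<in> carrier_mat k k" by (simp add: moore_def)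
  have "det (transpose_mat (moore q k k g)) \<noteq> 0"
    using assms det_transpose[of "moore q k k g" k] by (simp add: moore_def)
  from exists_mult_mat_vec_eq[OF M this, of "vec k b"]
  obtain x where x: "x \<in> carrier_vec k" "transpose_mat (moore q k k g) *\<^sub>v x = vec k b" by auto
  have "vec k (\<lambda>i. x $ i) = x" using x(1) by (intro eq_vecI) auto
  then have "\<forall>l<k. lin_eval q k (\<lambda>i. x $ i) (g l) = b l" using x(2) by (simp add: lin_eval_moore)
  then show ?thesis by blast
qed

lemma det_moore_fun_upd:
  "det (moore q (Suc s) (Suc s) (\<beta>(s := x)))
     = (\<Sum>i<Suc s. x ^ (q ^ i) * cofactor (moore q (Suc s) (Suc s) \<beta>) i s)"
proof -
  have del: "mat_delete (moore q (Suc s) (Suc s) (\<beta>(s := x))) i s = mat_delete (moore q (Suc s) (Suc s) \<beta>) i s" for i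
    by (rule eq_matI) (auto simp: mat_delete_def moore_def)
  have entry: "moore q (Suc s) (Suc s) (\<beta>(s := x)) $$ (i, s) = x ^ (q ^ i)" if "i < Suc s" for i
    using that by (simp add: moore_def)
  have "det (moore q (Suc s) (Suc s) (\<beta>(s := x)))
      = (\<Sum>i<Suc s. moore q (Suc s) (Suc s) (\<beta>(s := x)) $$ (i, s) * cofactor (moore q (Suc s) (Suc s) (\<beta>(s := x))) i s)"
    by (rule laplace_expansion_column) (simp_all add: moore_def)
  also have "\<dots> = (\<Sum>i<Suc s. x ^ (q ^ i) * cofactor (moore q (Suc s) (Suc s) \<beta>) i s)"
    by (rule sum.cong) (simp_all add: cofactor_def del entry)
  finally show ?thesis .
qed

lemma cofactor_moore_last:
  "cofactor (moore q (Suc s) (Suc s) \<beta>) s s = det (moore q s s \<beta>)"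
proof -
  have "mat_delete (moore q (Suc s) (Suc s) \<beta>) s s = moore q s s \<beta>"
    by (rule eq_matI) (auto simp: mat_delete_def moore_def)
  then show ?thesis by (simp add: cofactor_def flip: mult_2)
qed

lemma cofactor_moore_R_mat:
  "cofactor (moore q (k+2) (k+2) \<beta>) k (k+1) = - det (R_mat q k \<beta>)"
proof -
  have "mat_delete (moore q (k+2) (k+2) \<beta>) k (k+1) = R_mat q k \<beta>"
    by (rule eq_matI) (auto simp: mat_delete_def moore_def R_mat_def less_Suc_eq)
  moreover have "(-1::'a) ^ (k + (k+1)) = -1" by (simp flip: mult_2)
  ultimately show ?thesis by (simp add: cofactor_def)
qed

text \<open>The annihilator is \<open>det M\<^sub>k\<^sub>+\<^sub>2(\<beta>, x) / det M\<^sub>k\<^sub>+\<^sub>1(\<beta>)\<close>, expanded along its last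
  column; it vanishes at each \<open>\<beta>\<^sub>j\<close> because the Moore matrix then has two equal columns.\<close>
lemma moore_annihilator:
  fixes \<beta> :: "nat \<Rightarrow> 'a::field"
  assumes d: "det (moore q (k+1) (k+1) \<beta>) \<noteq> 0"
  shows "\<exists>e. e (k+1) = 1 \<and> - e k = det (R_mat q k \<beta>) / det (moore q (k+1) (k+1) \<beta>)
           \<and> (\<forall>j<k+1. lin_eval q (k+2) e (\<beta> j) = 0)"
proof -
  let ?d = "det (moore q (k+1) (k+1) \<beta>)"
  define e where "e i = cofactor (moore q (k+2) (k+2) \<beta>) i (k+1) / ?d" for i
  have "e (k+1) = 1"
    using cofactor_moore_last[of q "k+1" \<beta>] d by (simp add: e_def)
  moreover have "- e k = det (R_mat q k \<beta>) / ?d"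
    unfolding e_def cofactor_moore_R_mat by simp
  moreover have "lin_eval q (k+2) e (\<beta> j) = 0" if j: "j < k+1" for j
  proof -
    have "lin_eval q (k+2) e (\<beta> j)
        = (\<Sum>i<k+2. \<beta> j ^ (q ^ i) * cofactor (moore q (k+2) (k+2) \<beta>) i (k+1)) / ?d"
      unfolding lin_eval_def sum_divide_distrib by (rule sum.cong) (simp_all add: e_def)
    also have "\<dots> = det (moore q (k+2) (k+2) (\<beta>(k+1 := \<beta> j))) / ?d"
      using det_moore_fun_upd[of q "k+1" \<beta> "\<beta> j"] by simp
    also have "det (moore q (k+2) (k+2) (\<beta>(k+1 := \<beta> j))) = 0"
      by (rule det_identical_columns[of _ "k+2" j "k+1"]) (use j in \<open>auto simp: moore_def\<close>)
    finally show ?thesis by simp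
  qed
  ultimately show ?thesis by blast
qed

lemma span_q_cong: "(\<And>i. i < s \<Longrightarrow> v i = w i) \<Longrightarrow> span_q q v s = span_q q w s"
  unfolding span_q_def by (metis (no_types, lifting) lessThan_iff sum.cong)

lemma rank_dist_code_gabidulin:
  fixes b :: "nat \<Rightarrow> 'a::field"
  assumes "k \<le> d"
  shows "rank_dist_code q n (\<lambda>i. if i < n then lin_eval q d b (g i) else 0) (gabidulin q k n g)
       = Min ((\<lambda>e. dim_q q (span_q q (\<lambda>i. lin_eval q d e (g i)) n)) ` {e. \<forall>j\<ge>k. e j = b j})"
proof -
  define word where "word a = (\<lambda>i. if i < n then lin_eval q k a (g i) else 0)" for a
  define diff where "diff a = (\<lambda>j. b j - (if j < k then a j else 0))" for a :: "nat \<Rightarrow> 'a"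
  have dist: "rank_dist q n (\<lambda>i. if i < n then lin_eval q d b (g i) else 0) (word a)
      = dim_q q (span_q q (\<lambda>i. lin_eval q d (diff a) (g i)) n)" for a
    unfolding rank_dist_def word_def diff_def
    by (intro arg_cong[where f = "dim_q q"] span_q_cong) (simp add: lin_eval_pad[OF assms] lin_eval_diff)
  have gabidulin: "gabidulin q k n g = range word" by (auto simp: gabidulin_def word_def)
  have range_diff: "range diff = {e. \<forall>j\<ge>k. e j = b j}"
  proof (intro equalityI subsetI)
    fix e assume "e \<in> {e. \<forall>j\<ge>k. e j = b j}"
    then have "e = diff (\<lambda>j. b j - e j)" by (auto simp: diff_def)
    then show "e \<in> range diff" by blast
  qed (auto simp: diff_def)
  have "rank_dist q n (\<lambda>i. if i < n then lin_eval q d b (g i) else 0) ` range word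
      = (\<lambda>e. dim_q q (span_q q (\<lambda>i. lin_eval q d e (g i)) n)) ` range diff"
    by (simp add: image_image dist)
  then show ?thesis unfolding rank_dist_code_def gabidulin range_diff by simp
qed

section \<open>Subspaces over the fixed field of the Frobenius\<close>

lemma card_eq_card_kernel_mult_card_image:
  fixes h :: "'a::ab_group_add \<Rightarrow> 'b::ab_group_add"
  assumes fin: "finite U" and diff: "\<forall>x\<in>U. \<forall>y\<in>U. x - y \<in> U" and add: "\<forall>x\<in>U. \<forall>y\<in>U. x + y \<in> U"
    and h_diff: "\<And>x y. h (x - y) = h x - h y"
  shows "card U = card {x\<in>U. h x = 0} * card (h ` U)"
proof -
  let ?K = "{x\<in>U. h x = 0}"
  have "card U = card (\<Union>y\<in>h ` U. {x\<in>U. h x = y})" by (rule arg_cong[of _ _ card]) auto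
  also have "\<dots> = (\<Sum>y\<in>h ` U. card {x\<in>U. h x = y})"
    by (rule card_UN_disjoint) (use fin in auto)
  also have "\<dots> = (\<Sum>y\<in>h ` U. card ?K)"
  proof (rule sum.cong[OF refl])
    fix y assume "y \<in> h ` U"
    then obtain x0 where x0: "x0 \<in> U" "h x0 = y" by blast
    have h_add: "h (z + x0) = h z + h x0" for z
      using h_diff[of "z + x0" x0] by (simp add: algebra_simps)
    have "bij_betw (\<lambda>x. x - x0) {x\<in>U. h x = y} ?K"
      by (rule bij_betw_byWitness[where f' = "\<lambda>z. z + x0"]) (use x0 diff add h_diff h_add in auto)
    then show "card {x\<in>U. h x = y} = card ?K" by (rule bij_betw_same_card)
  qed
  finally show ?thesis by simp
qed

lemma lin_indep_qD:
  "lin_indep_q q v s \<Longrightarrow> \<forall>i<s. c i \<in> Fq q \<Longrightarrow> (\<Sum>i<s. c i * v i) = 0 \<Longrightarrow> i < s \<Longrightarrow> c i = 0"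
  unfolding lin_indep_q_def by blast

definition subspace_q :: "nat \<Rightarrow> 'a::field set \<Rightarrow> bool" where
  "subspace_q q V \<longleftrightarrow> 0 \<in> V \<and> (\<forall>x\<in>V. \<forall>y\<in>V. x + y \<in> V) \<and> (\<forall>c\<in>Fq q. \<forall>x\<in>V. c * x \<in> V)"

definition linear_q :: "nat \<Rightarrow> ('a::field \<Rightarrow> 'a) \<Rightarrow> bool" where
  "linear_q q h \<longleftrightarrow> (\<forall>x y. h (x + y) = h x + h y) \<and> (\<forall>c\<in>Fq q. \<forall>x. h (c * x) = c * h x)"

lemma linear_q_0: "linear_q q h \<Longrightarrow> h 0 = 0"
  unfolding linear_q_def by (metis add_cancel_right_right)

lemma linear_q_diff: "linear_q q h \<Longrightarrow> h (x - y) = h x - h y"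
  unfolding linear_q_def by (metis eq_diff_eq)

lemma linear_q_sum:
  "linear_q q h \<Longrightarrow> \<forall>j\<in>A. c j \<in> Fq q \<Longrightarrow> h (\<Sum>j\<in>A. c j * v j) = (\<Sum>j\<in>A. c j * h (v j))"
  by (induction A rule: infinite_finite_induct) (simp_all add: linear_q_0, simp add: linear_q_def)

lemma image_span_q:
  assumes h: "linear_q q h"
  shows "h ` span_q q v s = span_q q (\<lambda>i. h (v i)) s"
proof (intro equalityI subsetI)
  fix y assume "y \<in> h ` span_q q v s"
  then obtain c where c: "\<forall>i<s. c i \<in> Fq q" "y = h (\<Sum>i<s. c i * v i)" by (auto simp: span_q_def)
  then have "y = (\<Sum>i<s. c i * h (v i))" using linear_q_sum[OF h, of "{..<s}" c v] by simp
  with c(1) show "y \<in> span_q q (\<lambda>i. h (v i)) s" unfolding span_q_def by blast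
next
  fix y assume "y \<in> span_q q (\<lambda>i. h (v i)) s"
  then obtain c where c: "\<forall>i<s. c i \<in> Fq q" "y = (\<Sum>i<s. c i * h (v i))" by (auto simp: span_q_def)
  then have "y = h (\<Sum>i<s. c i * v i)" using linear_q_sum[OF h, of "{..<s}" c v] by simp
  moreover have "(\<Sum>i<s. c i * v i) \<in> span_q q v s" using c(1) unfolding span_q_def by blast
  ultimately show "y \<in> h ` span_q q v s" by blast
qed

lemma subspace_q_kernel:
  assumes V: "subspace_q q V" and h: "linear_q q h"
  shows "subspace_q q {x\<in>V. h x = 0}"
  unfolding subspace_q_def
proof (intro conjI ballI)
  show "0 \<in> {x\<in>V. h x = 0}" using V linear_q_0[OF h] by (simp add: subspace_q_def)
  show "x + y \<in> {x\<in>V. h x = 0}" if "x \<in> {x\<in>V. h x = 0}" "y \<in> {x\<in>V. h x = 0}" for x y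
    using that V h by (simp add: subspace_q_def linear_q_def)
  show "c * x \<in> {x\<in>V. h x = 0}" if "c \<in> Fq q" "x \<in> {x\<in>V. h x = 0}" for c x
    using that V h by (simp add: subspace_q_def linear_q_def)
qed

lemma subspace_q_sum:
  "subspace_q q V \<Longrightarrow> \<forall>i\<in>A. c i \<in> Fq q \<and> v i \<in> V \<Longrightarrow> (\<Sum>i\<in>A. c i * v i) \<in> V"
  by (induction A rule: infinite_finite_induct) (simp_all add: subspace_q_def)

lemma span_q_subset: "subspace_q q V \<Longrightarrow> \<forall>i<s. v i \<in> V \<Longrightarrow> span_q q v s \<subseteq> V"
  unfolding span_q_def using subspace_q_sum[of q V "{..<s}"] by auto

lemma span_q_eq_image:
  "span_q q v s = (\<lambda>c. \<Sum>i<s. c i * v i) ` PiE {..<s} (\<lambda>_. Fq q)"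
proof (intro equalityI subsetI)
  fix x assume "x \<in> span_q q v s"
  then obtain c where c: "\<forall>i<s. c i \<in> Fq q" "x = (\<Sum>i<s. c i * v i)" by (auto simp: span_q_def)
  then have "restrict c {..<s} \<in> PiE {..<s} (\<lambda>_. Fq q)" "x = (\<Sum>i<s. restrict c {..<s} i * v i)"
    by auto
  then show "x \<in> (\<lambda>c. \<Sum>i<s. c i * v i) ` PiE {..<s} (\<lambda>_. Fq q)" by blast
qed (auto simp: span_q_def)

lemma card_span_q_le: "card (span_q q (v :: nat \<Rightarrow> 'a) s) \<le> card (Fq q :: 'a::{field,finite} set) ^ s"
proof -
  have "finite (PiE {..<s} (\<lambda>_. Fq q :: 'a set))" by (simp add: finite_PiE)
  then have "card (span_q q v s) \<le> card (PiE {..<s} (\<lambda>_. Fq q :: 'a set))"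
    unfolding span_q_eq_image by (rule card_image_le)
  then show ?thesis by (simp add: card_PiE)
qed

context
  fixes q r :: nat
  assumes q_eq: "q = CHAR('a::{field,finite}) ^ r" and r_pos: "0 < r"
begin

lemma q_gt_1: "1 < q"
  unfolding q_eq using prime_gt_1_nat[OF prime_CHAR_finite_field] r_pos by (rule one_less_power)

lemma power_q_power_add: "(x + y :: 'a) ^ (q ^ i) = x ^ (q ^ i) + y ^ (q ^ i)"
  by (rule freshmans_dream'[OF prime_CHAR_finite_field, of _ "r * i"]) (simp add: q_eq power_mult)

lemma power_q_power_diff: "(x - y :: 'a) ^ (q ^ i) = x ^ (q ^ i) - y ^ (q ^ i)"
  by (metis eq_diff_eq power_q_power_add)

lemma Fq_power_q_power: "c \<in> Fq q \<Longrightarrow> (c :: 'a) ^ (q ^ i) = c"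
  by (induction i) (simp_all add: Fq_def power_mult power_Suc2)

lemma zero_in_Fq: "(0 :: 'a) \<in> Fq q"
  using q_gt_1 by (simp add: Fq_def)

lemma one_in_Fq: "(1 :: 'a) \<in> Fq q"
  by (simp add: Fq_def)

lemma Fq_diff: "c \<in> Fq q \<Longrightarrow> d \<in> Fq q \<Longrightarrow> (c - d :: 'a) \<in> Fq q"
  using power_q_power_diff[of c d 1] by (simp add: Fq_def)

lemma Fq_add: "c \<in> Fq q \<Longrightarrow> d \<in> Fq q \<Longrightarrow> (c + d :: 'a) \<in> Fq q"
  using power_q_power_add[of c d 1] by (simp add: Fq_def)

lemma Fq_uminus: "c \<in> Fq q \<Longrightarrow> (- c :: 'a) \<in> Fq q"
  using Fq_diff[OF zero_in_Fq, of c] by simp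

lemma Fq_mult: "c \<in> Fq q \<Longrightarrow> d \<in> Fq q \<Longrightarrow> (c * d :: 'a) \<in> Fq q"
  by (simp add: Fq_def power_mult_distrib)

lemma Fq_divide: "c \<in> Fq q \<Longrightarrow> d \<in> Fq q \<Longrightarrow> (c / d :: 'a) \<in> Fq q"
  by (simp add: Fq_def power_divide)

lemma card_Fq_le: "card (Fq q :: 'a set) \<le> q"
proof -
  define a :: "nat \<Rightarrow> 'a" where "a = (\<lambda>i. if i = 0 then -1 else 1)"
  have "Fq q = {x :: 'a. lin_eval q 2 a x = 0}"
    by (simp add: Fq_def lin_eval_def a_def numeral_2_eq_2)
  then show ?thesis using card_lin_eval_roots_le[of q 0 2 a, OF q_gt_1] by (simp add: a_def)
qed

lemma two_le_card_Fq: "2 \<le> card (Fq q :: 'a set)"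
proof -
  have "card {0, 1 :: 'a} \<le> card (Fq q :: 'a set)"
    using zero_in_Fq one_in_Fq by (intro card_mono) auto
  then show ?thesis by simp
qed

lemma linear_q_lin_eval: "linear_q q (lin_eval q s a :: 'a \<Rightarrow> 'a)"
  unfolding linear_q_def lin_eval_def
  by (auto simp: power_q_power_add power_mult_distrib Fq_power_q_power sum.distrib distrib_left
      sum_distrib_left mult_ac)

lemma subspace_q_diff: "subspace_q q V \<Longrightarrow> x \<in> V \<Longrightarrow> y \<in> V \<Longrightarrow> (x - y :: 'a) \<in> V"
  using Fq_uminus[OF one_in_Fq] unfolding subspace_q_def by (metis mult_minus1 diff_conv_add_uminus)

lemma subspace_q_span_q: "subspace_q q (span_q q (v :: nat \<Rightarrow> 'a) s)"
  unfolding subspace_q_def span_q_def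
proof (intro conjI ballI)
  show "0 \<in> {\<Sum>i<s. c i * v i |c. \<forall>i<s. c i \<in> Fq q}"
    using zero_in_Fq by (auto intro!: exI[of _ "\<lambda>_. 0"])
next
  fix x y assume "x \<in> {\<Sum>i<s. c i * v i |c. \<forall>i<s. c i \<in> Fq q}" "y \<in> {\<Sum>i<s. c i * v i |c. \<forall>i<s. c i \<in> Fq q}"
  then obtain c d where "\<forall>i<s. c i \<in> Fq q" "x = (\<Sum>i<s. c i * v i)" "\<forall>i<s. d i \<in> Fq q" "y = (\<Sum>i<s. d i * v i)"
    by blast
  then show "x + y \<in> {\<Sum>i<s. c i * v i |c. \<forall>i<s. c i \<in> Fq q}"
    by (auto intro!: exI[of _ "\<lambda>i. c i + d i"] Fq_add simp: sum.distrib distrib_right)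
next
  fix e x :: 'a assume e: "e \<in> Fq q" and "x \<in> {\<Sum>i<s. c i * v i |c. \<forall>i<s. c i \<in> Fq q}"
  then obtain c where "\<forall>i<s. c i \<in> Fq q" "x = (\<Sum>i<s. c i * v i)" by blast
  then show "e * x \<in> {\<Sum>i<s. c i * v i |c. \<forall>i<s. c i \<in> Fq q}"
    using e by (auto intro!: exI[of _ "\<lambda>i. e * c i"] Fq_mult simp: sum_distrib_left mult_ac)
qed

lemma in_span_q: "i < s \<Longrightarrow> (v i :: 'a) \<in> span_q q v s"
proof -
  assume "i < s"
  then have "v i = (\<Sum>j<s. (if j = i then 1 else 0) * v j)" by (simp add: if_distrib[of "\<lambda>c. c * _"] cong: if_cong)
  then show ?thesis unfolding span_q_def using zero_in_Fq one_in_Fq by fastforce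
qed

lemma lin_indep_q_prefix:
  assumes indep: "lin_indep_q q (v :: nat \<Rightarrow> 'a) n" and "k \<le> n"
  shows "lin_indep_q q v k"
  unfolding lin_indep_q_def
proof (intro allI impI)
  fix c i assume c: "(\<forall>i<k. c i \<in> Fq q) \<and> (\<Sum>i<k. c i * v i) = 0" and "i < k"
  let ?c = "\<lambda>i. if i < k then c i else 0"
  have "(\<Sum>i<n. ?c i * v i) = (\<Sum>i<k. ?c i * v i)"
    using \<open>k \<le> n\<close> by (intro sum.mono_neutral_right) auto
  also have "\<dots> = 0" using c by simp
  finally have "?c i = 0"
    using lin_indep_qD[OF indep, of ?c i] c zero_in_Fq \<open>i < k\<close> \<open>k \<le> n\<close> by simp
  then show "c i = 0" using \<open>i < k\<close> by simp
qed

lemma card_span_q: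
  assumes "lin_indep_q q (v :: nat \<Rightarrow> 'a) s"
  shows "card (span_q q v s) = card (Fq q :: 'a set) ^ s"
proof -
  have "inj_on (\<lambda>c. \<Sum>i<s. c i * v i) (PiE {..<s} (\<lambda>_. Fq q))"
  proof (rule inj_onI)
    fix c d assume c: "c \<in> PiE {..<s} (\<lambda>_. Fq q)" and d: "d \<in> PiE {..<s} (\<lambda>_. Fq q)"
      and eq: "(\<Sum>i<s. c i * v i) = (\<Sum>i<s. d i * v i)"
    have "(\<Sum>i<s. (c i - d i) * v i) = 0" using eq by (simp add: left_diff_distrib sum_subtractf)
    moreover have "\<forall>i<s. c i - d i \<in> Fq q" using c d by (simp add: PiE_iff Fq_diff)
    ultimately have "\<forall>i<s. c i - d i = 0"
      using lin_indep_qD[OF assms, of "\<lambda>i. c i - d i"] by blast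
    then show "c = d" using c d by (intro PiE_ext) auto
  qed
  then show ?thesis unfolding span_q_eq_image by (simp add: card_image card_PiE)
qed

lemma lin_indep_q_fun_upd:
  assumes b: "lin_indep_q q (b :: nat \<Rightarrow> 'a) s" and x: "x \<notin> span_q q b s"
  shows "lin_indep_q q (b(s := x)) (Suc s)"
  unfolding lin_indep_q_def
proof (rule allI, rule impI)
  fix c :: "nat \<Rightarrow> 'a"
  assume "(\<forall>i<Suc s. c i \<in> Fq q) \<and> (\<Sum>i<Suc s. c i * (b(s := x)) i) = 0"
  then have c: "\<forall>i<Suc s. c i \<in> Fq q" and c_sum: "(\<Sum>i<Suc s. c i * (b(s := x)) i) = 0" by auto
  have "(\<Sum>i<s. c i * (b(s := x)) i) = (\<Sum>i<s. c i * b i)" by (rule sum.cong) auto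
  with c_sum have sum: "c s * x = - (\<Sum>i<s. c i * b i)" by (simp add: eq_neg_iff_add_eq_0 add.commute)
  have cs: "c s = 0"
  proof (rule ccontr)
    assume "c s \<noteq> 0"
    then have "x = (c s * x) / c s" by simp
    also have "\<dots> = - (\<Sum>i<s. c i * b i) / c s" by (simp only: sum)
    also have "\<dots> = (\<Sum>i<s. (- c i / c s) * b i)"
      unfolding sum_negf[symmetric] sum_divide_distrib by (rule sum.cong) simp_all
    finally have x_eq: "x = (\<Sum>i<s. (- c i / c s) * b i)" .
    have "\<forall>i<s. - c i / c s \<in> Fq q" using c by (simp add: Fq_divide Fq_uminus)
    with x_eq have "x \<in> span_q q b s"
      unfolding span_q_def by (intro CollectI exI[of _ "\<lambda>i. - c i / c s"] conjI) auto
    with x show False ..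
  qed
  with sum have "(\<Sum>i<s. c i * b i) = 0" by simp
  moreover have "\<forall>i<s. c i \<in> Fq q" using c by simp
  ultimately have "\<forall>i<s. c i = 0" using lin_indep_qD[OF b] by blast
  with cs show "\<forall>i<Suc s. c i = 0" by (auto simp: less_Suc_eq)
qed

lemma lin_indep_q_length_less: "lin_indep_q q (b :: nat \<Rightarrow> 'a) s \<Longrightarrow> s < card (UNIV :: 'a set)"
proof -
  assume b: "lin_indep_q q b s"
  have "s < 2 ^ s" by (rule less_exp)
  also have "\<dots> \<le> card (Fq q :: 'a set) ^ s" using two_le_card_Fq by (rule power_mono) simp
  also have "\<dots> = card (span_q q b s)" using card_span_q[OF b] ..
  also have "\<dots> \<le> card (UNIV :: 'a set)" by (rule card_mono) auto
  finally show ?thesis .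
qed

lemma
  fixes V :: "'a set"
  shows lin_indep_q_le_dim_q: "\<forall>i<t. b i \<in> V \<Longrightarrow> lin_indep_q q b t \<Longrightarrow> t \<le> dim_q q V"
    and dim_q_lin_indep: "\<exists>b. (\<forall>i<dim_q q V. b i \<in> V) \<and> lin_indep_q q b (dim_q q V)"
proof -
  let ?S = "{t. \<exists>b. (\<forall>i<t. b i \<in> V) \<and> lin_indep_q q b t}"
  have fin: "finite ?S"
    by (rule finite_subset[of _ "{..<card (UNIV :: 'a set)}"]) (auto dest: lin_indep_q_length_less)
  have "0 \<in> ?S" by (auto simp: lin_indep_q_def)
  then show "\<exists>b. (\<forall>i<dim_q q V. b i \<in> V) \<and> lin_indep_q q b (dim_q q V)"
    using Max_in[OF fin] unfolding dim_q_def by blast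
  show "\<forall>i<t. b i \<in> V \<Longrightarrow> lin_indep_q q b t \<Longrightarrow> t \<le> dim_q q V"
    unfolding dim_q_def by (rule Max_ge[OF fin]) blast
qed

lemma dim_q_basis:
  assumes V: "subspace_q q (V :: 'a set)"
  obtains b where "lin_indep_q q b (dim_q q V)" "span_q q b (dim_q q V) = V"
proof -
  let ?d = "dim_q q V"
  obtain b where b: "\<forall>i<?d. b i \<in> V" "lin_indep_q q b ?d" using dim_q_lin_indep by blast
  have "V \<subseteq> span_q q b ?d"
  proof
    fix x assume "x \<in> V"
    show "x \<in> span_q q b ?d"
    proof (rule ccontr)
      assume "x \<notin> span_q q b ?d"
      then have indep: "lin_indep_q q (b(?d := x)) (Suc ?d)" by (rule lin_indep_q_fun_upd[OF b(2)])
      have "\<forall>i<Suc ?d. (b(?d := x)) i \<in> V" using b(1) \<open>x \<in> V\<close> less_Suc_eq by auto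
      from lin_indep_q_le_dim_q[OF this indep] show False by simp
    qed
  qed
  with span_q_subset[OF V b(1)] have "span_q q b ?d = V" by blast
  with b(2) show ?thesis by (rule that)
qed

lemma card_subspace_q:
  assumes "subspace_q q (V :: 'a set)"
  shows "card V = card (Fq q :: 'a set) ^ dim_q q V"
proof -
  obtain b where b: "lin_indep_q q b (dim_q q V)" "span_q q b (dim_q q V) = V"
    using dim_q_basis[OF assms] by blast
  show ?thesis using card_span_q[OF b(1)] unfolding b(2) .
qed

lemma dim_q_span_q_le: "dim_q q (span_q q (v :: nat \<Rightarrow> 'a) s) \<le> s"
proof -
  have "card (Fq q :: 'a set) ^ dim_q q (span_q q v s) \<le> card (Fq q :: 'a set) ^ s"
    unfolding card_subspace_q[OF subspace_q_span_q, symmetric] by (rule card_span_q_le)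
  then show ?thesis using two_le_card_Fq by (simp add: power_le_imp_le_exp)
qed

lemma dim_q_kernel_add_dim_q_image:
  assumes g: "lin_indep_q q (g :: nat \<Rightarrow> 'a) n" and h: "linear_q q h"
  shows "dim_q q {x\<in>span_q q g n. h x = 0} + dim_q q (h ` span_q q g n) = n"
proof -
  let ?Q = "card (Fq q :: 'a set)" and ?U = "span_q q g n"
  let ?K = "{x\<in>?U. h x = 0}"
  have K: "subspace_q q ?K" by (rule subspace_q_kernel[OF subspace_q_span_q h])
  have W: "subspace_q q (h ` ?U)" unfolding image_span_q[OF h] by (rule subspace_q_span_q)
  have "card ?U = card ?K * card (h ` ?U)"
  proof (rule card_eq_card_kernel_mult_card_image)
    show "\<forall>x\<in>?U. \<forall>y\<in>?U. x - y \<in> ?U" using subspace_q_diff[OF subspace_q_span_q] by blast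
    show "\<forall>x\<in>?U. \<forall>y\<in>?U. x + y \<in> ?U" using subspace_q_span_q unfolding subspace_q_def by blast
  qed (simp_all add: linear_q_diff[OF h])
  then have "?Q ^ n = ?Q ^ (dim_q q ?K + dim_q q (h ` ?U))"
    unfolding card_span_q[OF g] card_subspace_q[OF K] card_subspace_q[OF W] by (simp add: power_add)
  then show ?thesis using two_le_card_Fq by simp
qed

lemma dim_q_image_le:
  assumes g: "lin_indep_q q (g :: nat \<Rightarrow> 'a) n" and h: "linear_q q h"
    and \<beta>: "\<forall>i<t. \<beta> i \<in> span_q q g n \<and> h (\<beta> i) = 0" "lin_indep_q q \<beta> t"
  shows "dim_q q (h ` span_q q g n) \<le> n - t"
proof -
  have "t \<le> dim_q q {x\<in>span_q q g n. h x = 0}" using \<beta> by (intro lin_indep_q_le_dim_q) auto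
  then show ?thesis using dim_q_kernel_add_dim_q_image[OF g h] by linarith
qed

lemma exists_lin_indep_in_kernel:
  assumes g: "lin_indep_q q (g :: nat \<Rightarrow> 'a) n" and h: "linear_q q h"
    and small: "dim_q q (h ` span_q q g n) < n - k"
  shows "\<exists>\<beta>. (\<forall>i<k+1. \<beta> i \<in> span_q q g n \<and> h (\<beta> i) = 0) \<and> lin_indep_q q \<beta> (k+1)"
proof -
  let ?K = "{x\<in>span_q q g n. h x = 0}"
  obtain b where b: "\<forall>i<dim_q q ?K. b i \<in> ?K" "lin_indep_q q b (dim_q q ?K)"
    using dim_q_lin_indep by blast
  have "k + 1 \<le> dim_q q ?K" using small dim_q_kernel_add_dim_q_image[OF g h] by linarith
  then show ?thesis using b lin_indep_q_prefix[OF b(2)] by (intro exI[of _ b]) auto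
qed

section \<open>Rank distance to the Gabidulin code\<close>

context
  fixes m :: nat
  assumes card_UNIV: "card (UNIV :: 'a set) = q ^ m"
begin

lemma card_Fq: "card (Fq q :: 'a set) = q"
proof -
  define h :: "'a \<Rightarrow> 'a" where "h x = x ^ q - x" for x
  have "m \<noteq> 0"
    using card_UNIV two_le_card_Fq card_mono[of UNIV "Fq q :: 'a set"] by (cases m) auto
  txt \<open>The image of \<open>h\<close> lies in the kernel of the trace \<open>\<Sum>j<m. y^(q^j)\<close>, which has at
    most \<open>q^(m-1)\<close> roots; so the kernel \<open>F\<^sub>q\<close> of \<open>h\<close> has at least \<open>q\<close> elements.\<close>
  have trace: "lin_eval q m (\<lambda>_. 1) (h x) = 0" for x
  proof -
    have "lin_eval q m (\<lambda>_. 1) (h x) = (\<Sum>j<m. x ^ (q ^ Suc j) - x ^ (q ^ j))"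
      unfolding lin_eval_def h_def
      by (rule sum.cong) (simp_all add: power_q_power_diff power_mult[symmetric])
    also have "\<dots> = x ^ (q ^ m) - x"
      using sum_lessThan_telescope[of "\<lambda>j. x ^ (q ^ j)" m] by simp
    finally show ?thesis using power_card_UNIV_eq[of x] by (simp add: card_UNIV)
  qed
  have "card (range h) \<le> card {y :: 'a. lin_eval q m (\<lambda>_. 1) y = 0}"
    using trace by (intro card_mono) auto
  also have "\<dots> \<le> q ^ (m - 1)"
    using card_lin_eval_roots_le[of q 0 m "\<lambda>_. 1", OF q_gt_1] \<open>m \<noteq> 0\<close> by simp
  finally have image_le: "card (range h) \<le> q ^ (m - 1)" .
  have "q * q ^ (m - 1) = card {x \<in> UNIV. h x = 0} * card (range h)"
  proof -
    have "h (x - y) = h x - h y" for x y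
      using power_q_power_diff[of x y 1] by (simp add: h_def)
    then have "card (UNIV :: 'a set) = card {x \<in> UNIV. h x = 0} * card (range h)"
      by (intro card_eq_card_kernel_mult_card_image) auto
    moreover have "q * q ^ (m - 1) = q ^ m" using \<open>m \<noteq> 0\<close> by (simp flip: power_Suc)
    ultimately show ?thesis by (simp add: card_UNIV)
  qed
  also have "{x \<in> UNIV. h x = 0} = Fq q" by (simp add: Fq_def h_def)
  also have "card (Fq q :: 'a set) * card (range h) \<le> card (Fq q :: 'a set) * q ^ (m - 1)"
    using image_le by simp
  finally show ?thesis using card_Fq_le q_gt_1 by simp
qed

text \<open>The polynomial vanishes on all \<open>q^s\<close> elements of \<open>\<langle>\<beta>\<rangle>\<close>, while a nonzero one of
  \<open>q\<close>-degree below \<open>s\<close> has at most \<open>q^(s-1)\<close> roots.\<close>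
lemma lin_eval_vanishing_on_lin_indep:
  assumes \<beta>: "lin_indep_q q \<beta> s" and zero: "\<forall>j<s. lin_eval q s a (\<beta> j) = (0 :: 'a)" and "i < s"
  shows "a i = 0"
proof (rule ccontr)
  assume "a i \<noteq> 0"
  have "span_q q \<beta> s \<subseteq> {x. lin_eval q s a x = 0}"
    using zero linear_q_sum[OF linear_q_lin_eval, of "{..<s}"] by (auto simp: span_q_def)
  then have "q ^ s \<le> card {x. lin_eval q s a x = 0}"
    using card_mono[of "{x. lin_eval q s a x = 0}" "span_q q \<beta> s"] by (simp add: card_span_q[OF \<beta>] card_Fq)
  also have "\<dots> \<le> q ^ (s - 1)"
    using card_lin_eval_roots_le[of q i s a, OF q_gt_1 \<open>i < s\<close> \<open>a i \<noteq> 0\<close>] .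
  finally show False using q_gt_1 \<open>i < s\<close> by simp
qed

lemma det_moore_nonzero:
  assumes \<beta>: "lin_indep_q q (\<beta> :: nat \<Rightarrow> 'a) s"
  shows "det (moore q s s \<beta>) \<noteq> 0"
proof
  let ?M = "transpose_mat (moore q s s \<beta>)"
  assume "det (moore q s s \<beta>) = 0"
  then have "det ?M = 0" using det_transpose[of "moore q s s \<beta>" s] by (simp add: moore_def)
  then obtain v where v: "v \<in> carrier_vec s" "v \<noteq> 0\<^sub>v s" "?M *\<^sub>v v = 0\<^sub>v s"
    using det_0_iff_vec_prod_zero_field[of ?M s] by (auto simp: moore_def)
  have "vec s (\<lambda>i. v $ i) = v" using v(1) by (intro eq_vecI) auto
  then have "\<forall>j<s. lin_eval q s (\<lambda>i. v $ i) (\<beta> j) = 0" using v(3) by (simp add: lin_eval_moore)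
  then have "v = 0\<^sub>v s" using lin_eval_vanishing_on_lin_indep[OF \<beta>] v(1) by (intro eq_vecI) auto
  with v(2) show False ..
qed

lemma coeff_of_monic_annihilator:
  assumes \<beta>: "lin_indep_q q \<beta> (k+1)" and e: "e (k+1) = 1"
    and zero: "\<forall>j<k+1. lin_eval q (k+2) e (\<beta> j) = (0 :: 'a)"
  shows "- e k = det (R_mat q k \<beta>) / det (moore q (k+1) (k+1) \<beta>)"
proof -
  obtain e' where e': "e' (k+1) = 1" "- e' k = det (R_mat q k \<beta>) / det (moore q (k+1) (k+1) \<beta>)"
    "\<forall>j<k+1. lin_eval q (k+2) e' (\<beta> j) = 0"
    using moore_annihilator[OF det_moore_nonzero[OF \<beta>]] by blast
  have diff: "lin_eval q (k+1) (\<lambda>i. e i - e' i) x = lin_eval q (k+2) e x - lin_eval q (k+2) e' x" for x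
  proof -
    have "lin_eval q (k+1) (\<lambda>i. e i - e' i) x = lin_eval q (k+2) (\<lambda>i. e i - e' i) x"
      using e e'(1) by (simp add: lin_eval_Suc)
    then show ?thesis by (simp only: lin_eval_diff)
  qed
  have "\<forall>j<k+1. lin_eval q (k+1) (\<lambda>i. e i - e' i) (\<beta> j) = 0"
    unfolding diff using zero e'(3) by simp
  from lin_eval_vanishing_on_lin_indep[OF \<beta> this, of k] have "e k = e' k" by simp
  with e'(2) show ?thesis by simp
qed

lemma gabidulin_interpolant_rank_le:
  assumes g: "lin_indep_q q (g :: nat \<Rightarrow> 'a) n" and "k \<le> n" and "k \<le> d"
  shows "\<exists>e. (\<forall>j\<ge>k. e j = b j) \<and> dim_q q (lin_eval q d e ` span_q q g n) \<le> n - k"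
proof -
  have g_k: "lin_indep_q q g k" by (rule lin_indep_q_prefix[OF g \<open>k \<le> n\<close>])
  obtain a where a: "\<forall>l<k. lin_eval q k a (g l) = lin_eval q d b (g l)"
    using moore_interpolation[where b = "\<lambda>l. lin_eval q d b (g l)", OF det_moore_nonzero[OF g_k]] by blast
  define e where "e j = b j - (if j < k then a j else 0)" for j
  have "lin_eval q d e x = lin_eval q d b x - lin_eval q k a x" for x
    unfolding lin_eval_pad[OF \<open>k \<le> d\<close>] lin_eval_diff by (rule lin_eval_cong) (simp add: e_def)
  then have "\<forall>i<k. g i \<in> span_q q g n \<and> lin_eval q d e (g i) = 0"
    using a \<open>k \<le> n\<close> in_span_q[of _ n g] by simp
  then have "dim_q q (lin_eval q d e ` span_q q g n) \<le> n - k"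
    using dim_q_image_le[where h = "lin_eval q d e" and \<beta> = g and t = k, OF g linear_q_lin_eval] g_k by blast
  moreover have "\<forall>j\<ge>k. e j = b j" by (simp add: e_def)
  ultimately show ?thesis by blast
qed

lemma gabidulin_rank_less_of_witness:
  assumes g: "lin_indep_q q (g :: nat \<Rightarrow> 'a) n" and "k < n" and b: "b (k+1) = 1"
    and \<beta>: "\<forall>i<k+1. \<beta> i \<in> span_q q g n" "lin_indep_q q \<beta> (k+1)"
    and a1: "- b k = det (R_mat q k \<beta>) / det (moore q (k+1) (k+1) \<beta>)"
  shows "\<exists>e. (\<forall>j\<ge>k. e j = b j) \<and> dim_q q (lin_eval q (k+2) e ` span_q q g n) < n - k"
proof -
  obtain e' where e': "e' (k+1) = 1" "- e' k = det (R_mat q k \<beta>) / det (moore q (k+1) (k+1) \<beta>)"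
    "\<forall>j<k+1. lin_eval q (k+2) e' (\<beta> j) = 0"
    using moore_annihilator[OF det_moore_nonzero[OF \<beta>(2)]] by blast
  define e where "e j = (if j < k then e' j else b j)" for j
  have "b k = e' k" using a1 e'(2) by (metis neg_equal_iff_equal)
  then have "lin_eval q (k+2) e = lin_eval q (k+2) e'"
    using b e'(1) by (intro ext lin_eval_cong) (auto simp: e_def less_Suc_eq)
  then have "dim_q q (lin_eval q (k+2) e ` span_q q g n) \<le> n - (k+1)"
    using \<beta> e'(3) dim_q_image_le[where h = "lin_eval q (k+2) e" and \<beta> = \<beta> and t = "k+1", OF g linear_q_lin_eval]
    by simp
  moreover have "\<forall>j\<ge>k. e j = b j" by (simp add: e_def)
  ultimately show ?thesis using \<open>k < n\<close> by (intro exI[of _ e]) auto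
qed

lemma gabidulin_witness_of_rank_less:
  assumes g: "lin_indep_q q (g :: nat \<Rightarrow> 'a) n" and e: "e (k+1) = 1"
    and small: "dim_q q (lin_eval q (k+2) e ` span_q q g n) < n - k"
  shows "\<exists>\<beta>. (\<forall>i<k+1. \<beta> i \<in> span_q q g n) \<and> lin_indep_q q \<beta> (k+1) \<and>
    - e k = det (R_mat q k \<beta>) / det (moore q (k+1) (k+1) \<beta>)"
proof -
  obtain \<beta> where \<beta>: "\<forall>i<k+1. \<beta> i \<in> span_q q g n \<and> lin_eval q (k+2) e (\<beta> i) = 0" "lin_indep_q q \<beta> (k+1)"
    using exists_lin_indep_in_kernel[OF g linear_q_lin_eval small] by blast
  then have "- e k = det (R_mat q k \<beta>) / det (moore q (k+1) (k+1) \<beta>)"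
    using coeff_of_monic_annihilator[where e = e and k = k, OF \<beta>(2) e] by blast
  with \<beta> show ?thesis by blast
qed

lemma gabidulin_rank_dist_ne_iff:
  assumes g: "lin_indep_q q (g :: nat \<Rightarrow> 'a) n" and "k < n" and b: "b (k+1) = 1"
  shows "rank_dist_code q n (\<lambda>i. if i < n then lin_eval q (k+2) b (g i) else 0) (gabidulin q k n g) \<noteq> n - k
    \<longleftrightarrow> (\<exists>\<beta>. (\<forall>i<k+1. \<beta> i \<in> span_q q g n) \<and> lin_indep_q q \<beta> (k+1) \<and>
          - b k = det (R_mat q k \<beta>) / det (moore q (k+1) (k+1) \<beta>))"
proof -
  define D where "D e = dim_q q (lin_eval q (k+2) e ` span_q q g n)" for e
  define E where "E = {e. \<forall>j\<ge>k. e j = b j}"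
  have dist: "rank_dist_code q n (\<lambda>i. if i < n then lin_eval q (k+2) b (g i) else 0) (gabidulin q k n g)
      = Min (D ` E)"
    unfolding rank_dist_code_gabidulin[of k "k+2", OF le_add1] D_def E_def image_span_q[OF linear_q_lin_eval] ..
  have fin: "finite (D ` E)"
    by (rule finite_subset[of _ "{..n}"])
      (auto simp: D_def image_span_q[OF linear_q_lin_eval] dim_q_span_q_le)
  obtain e0 where "e0 \<in> E" "D e0 \<le> n - k"
    using gabidulin_interpolant_rank_le[OF g, of k "k+2" b] \<open>k < n\<close> by (auto simp: D_def E_def)
  then have "Min (D ` E) \<le> n - k" using Min_le[OF fin] order_trans by blast
  then have "Min (D ` E) \<noteq> n - k \<longleftrightarrow> Min (D ` E) < n - k" by linarith
  also have "\<dots> \<longleftrightarrow> (\<exists>e\<in>E. D e < n - k)"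
    using Min_less_iff[OF fin, of "n - k"] \<open>e0 \<in> E\<close> by blast
  also have "\<dots> \<longleftrightarrow> (\<exists>\<beta>. (\<forall>i<k+1. \<beta> i \<in> span_q q g n) \<and> lin_indep_q q \<beta> (k+1) \<and>
          - b k = det (R_mat q k \<beta>) / det (moore q (k+1) (k+1) \<beta>))" (is "_ \<longleftrightarrow> ?witness")
  proof
    assume "\<exists>e\<in>E. D e < n - k"
    then obtain e where e: "e \<in> E" "D e < n - k" by blast
    then have "e (k+1) = 1" "e k = b k" using b by (auto simp: E_def)
    with gabidulin_witness_of_rank_less[where e = e and k = k, OF g \<open>e (k+1) = 1\<close>] e(2)
    show ?witness by (simp add: D_def)
  next
    assume ?witness
    then obtain \<beta> where "\<forall>i<k+1. \<beta> i \<in> span_q q g n" "lin_indep_q q \<beta> (k+1)"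
        "- b k = det (R_mat q k \<beta>) / det (moore q (k+1) (k+1) \<beta>)" by blast
    from gabidulin_rank_less_of_witness[OF g \<open>k < n\<close> b this] show "\<exists>e\<in>E. D e < n - k"
      by (auto simp: D_def E_def)
  qed
  finally show ?thesis unfolding dist .
qed

end

end

theorem lemma3:
  fixes q m k n :: nat and g :: "nat \<Rightarrow> 'a::{field,finite}"
    and a1 :: 'a and c :: "nat \<Rightarrow> 'a"
  assumes q_pp: "\<exists>p r. prime p \<and> r > 0 \<and> q = p ^ r"
    and card: "card (UNIV :: 'a set) = q ^ m"
    and k1: "1 \<le> k" and kn: "k + 1 < n" and nm: "n \<le> m"
    and g_indep: "lin_indep_q q g n"
  shows "rank_dist_code q n
           (\<lambda>i. if i < n then (g i ^ (q ^ (k+1)) - a1 * g i ^ (q ^ k)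
                               + (\<Sum>j<k. c j * g i ^ (q ^ j))) else 0)
           (gabidulin q k n g) \<noteq> n - k
    \<longleftrightarrow> (\<exists>\<beta> :: nat \<Rightarrow> 'a. (\<forall>i<k+1. \<beta> i \<in> span_q q g n) \<and> lin_indep_q q \<beta> (k+1) \<and>
          a1 = det (R_mat q k \<beta>) / det (moore q (k+1) (k+1) \<beta>))"
proof -
  obtain p r where p: "prime p" "0 < r" "q = p ^ r" using q_pp by blast
  have q: "q = CHAR('a) ^ r"
    using CHAR_eq_prime_of_card[where 'a = 'a, OF p(1), of "r * m"] card p(3) by (simp add: power_mult)
  define b where "b i = (if i < k then c i else if i = k then - a1 else 1)" for i
  have b_low: "lin_eval q k b x = lin_eval q k c x" for x by (rule lin_eval_cong) (simp add: b_def)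
  have "(\<lambda>i. if i < n then g i ^ (q ^ (k+1)) - a1 * g i ^ (q ^ k) + (\<Sum>j<k. c j * g i ^ (q ^ j)) else 0)
      = (\<lambda>i. if i < n then lin_eval q (k+2) b (g i) else 0)"
    by (intro ext, simp only: add_2_eq_Suc' lin_eval_Suc b_low) (simp add: b_def lin_eval_def)
  moreover have "- b k = a1" by (simp add: b_def)
  moreover have "b (k+1) = 1" by (simp add: b_def)
  ultimately show ?thesis using gabidulin_rank_dist_ne_iff[OF q p(2) card g_indep, of k b] kn by simp
qed

end
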